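(* Let $M$ be a finitely presented $n$-parameter persistence module with minimal free resolution $(F_\bullet,p_\bullet)$ and fixed decomposition isomorphisms as described in the context. If $\vec b\in\xi_0(M)$ (a generator of $F_0$), then $\vec b$ generates a non-empty bar in $M^{\mathcal L_{\vec b}}$.
   Context: Modules are $\mathbb{R}^n$-graded modules over $P_n$ (monoid ring over a field of $([0,\infty)^n,+)$); $\xi_0(M)$ denotes the generators (with their grades) of $F_0$ in a minimal free resolution. For $\vec a\in\mathbb{R}^n$, $\mathcal L_{\vec a}$ is the line $t\mapsto\vec a+t\vec1$. For a positively sloped line $\mathcal L$ with order-preserving $\|\cdot\|_\infty$-isometric parametrization $\iota$, $M^{\mathcal L}=M\circ\iota$, and $F^{\mathcal L}_\bullet$ is the induced free resolution of $M^{\mathcal L}$ (pullback along $\iota$): generator $\vec a$ of $F_i$ corresponds to $\vec a^{\mathcal L}$ of grade $\iota^{-1}(\mathrm{push}_{\mathcal L}(\mathrm{gr}\,\vec a))$, where $\mathrm{push}_{\mathcal L}(\vec p)=\min\{\vec q\in\mathcal L:\vec q\ge\vec p\}$. For each $\mathcal L$ fix an isomorphism $\phi:M^{\mathcal L}\to\bigoplus_{j\in\mathcal J}\mathds 1^{I_j}$, $I_j=[b_j,d_j)$ (possibly empty), with $|\mathcal J|$ equal to the number of generators of $F_0$. The canonical resolution $F'_\bullet$ of $\bigoplus\mathds 1^{I_j}$ has $F'_0$ free on $\{b_j\}$, $F'_1$ free on $\{d_j:d_j\neq\infty\}$, $d_j\mapsto x^{d_j-b_j}b_j$; $\phi$ lifts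 to a chain map $\phi_\bullet:F^{\mathcal L}_\bullet\to F'_\bullet$. A generator $\vec b$ of $F_0$ generates the bar $I_j$ in $M^{\mathcal L}$ if $\mathrm{gr}(\vec b^{\mathcal L})=b_j$ and the coefficient of $b_j$ in $\phi_0(\vec b^{\mathcal L})$ is nonzero; a generator $\vec r$ of $F_1$ kills $I_j$ if $\mathrm{gr}(\vec r^{\mathcal L})=d_j$ and the coefficient of $d_j$ in $\phi_1(\vec r^{\mathcal L})$ is nonzero. The isomorphisms are fixed so that each bar is generated by a unique generator of $F^{\mathcal L}_0$ and killed by a unique generator of $F^{\mathcal L}_1$, and every generator of $F^{\mathcal L}_0$ generates some (possibly empty) bar. *)

theory Defs
  imports "HOL-Analysis.Analysis" "HOL-Library.Extended_Real"
begin

text \<open>Grades live in real^'n (n-parameter), ordered componentwise.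
  The line L_a is t maps to a + t*1; this parametrisation is order preserving and
  an isometry for the sup norm.\<close>

definition diag_line :: "real^'n \<Rightarrow> real \<Rightarrow> real^'n" where
  "diag_line a t = a + t *\<^sub>R 1"

definition line_of :: "real^'n \<Rightarrow> (real^'n) set" where
  "line_of a = range (diag_line a)"

definition push_line :: "real^'n \<Rightarrow> real^'n \<Rightarrow> real^'n" where
  "push_line a p = (LEAST q. q \<in> line_of a \<and> p \<le> q)"

definition line_grade :: "real^'n \<Rightarrow> real^'n \<Rightarrow> real" where
  "line_grade a p = (THE t. diag_line a t = push_line a p)"

text \<open>A chain complex of graded free modules F_0 <- F_1 <- F_2 <- ... over the monoid ring
  is given by generator sets gens i (for F_i), grades gr i g of the generators, and
  scalar matrices D i g h: the differential F_{i+1} -> F_i sends the generator g of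
  F_{i+1} to the sum over h of D i g h * x^(gr (i+1) g - gr i h) * h.
  The homogeneous part of F_i of grade a is the k-vector space with basis
  the generators g with gr i g <= a (coordinates x :: 'g => 'k), and the structure maps
  are the inclusions.\<close>

definition free_elem ::
  "(nat \<Rightarrow> 'g set) \<Rightarrow> (nat \<Rightarrow> 'g \<Rightarrow> 'a::ord) \<Rightarrow> nat \<Rightarrow> 'a \<Rightarrow> ('g \<Rightarrow> 'k::zero) \<Rightarrow> bool" where
  "free_elem gens gr i a x \<longleftrightarrow> (\<forall>g. x g \<noteq> 0 \<longrightarrow> g \<in> gens i \<and> gr i g \<le> a)"

definition dapply ::
  "(nat \<Rightarrow> 'g set) \<Rightarrow> (nat \<Rightarrow> 'g \<Rightarrow> 'g \<Rightarrow> 'k::comm_semiring_1) \<Rightarrow> nat \<Rightarrow> ('g \<Rightarrow> 'k) \<Rightarrow> ('g \<Rightarrow> 'k)" where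
  "dapply gens D i y = (\<lambda>h. \<Sum>g\<in>gens (Suc i). y g * D i g h)"

definition graded_free_complex ::
  "(nat \<Rightarrow> 'g set) \<Rightarrow> (nat \<Rightarrow> 'g \<Rightarrow> 'a::ord) \<Rightarrow> (nat \<Rightarrow> 'g \<Rightarrow> 'g \<Rightarrow> 'k::comm_semiring_1) \<Rightarrow> bool" where
  "graded_free_complex gens gr D \<longleftrightarrow>
     (\<forall>i. finite (gens i)) \<and>
     (\<forall>i g h. D i g h \<noteq> 0 \<longrightarrow> g \<in> gens (Suc i) \<and> h \<in> gens i \<and> gr i h \<le> gr (Suc i) g) \<and>
     (\<forall>i. \<forall>g\<in>gens (Suc (Suc i)). dapply gens D i (D (Suc i) g) = (\<lambda>_. 0))"

definition exact_in_positive_degrees ::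
  "(nat \<Rightarrow> 'g set) \<Rightarrow> (nat \<Rightarrow> 'g \<Rightarrow> 'a::ord) \<Rightarrow> (nat \<Rightarrow> 'g \<Rightarrow> 'g \<Rightarrow> 'k::comm_semiring_1) \<Rightarrow> bool" where
  "exact_in_positive_degrees gens gr D \<longleftrightarrow>
     (\<forall>i a x. free_elem gens gr (Suc i) a x \<and> dapply gens D i x = (\<lambda>_. 0) \<longrightarrow>
        (\<exists>y. free_elem gens gr (Suc (Suc i)) a y \<and> dapply gens D (Suc i) y = x))"

text \<open>minimality: all matrix entries lie in the maximal ideal, i.e. no nonzero entry
  between generators of equal grade\<close>
definition minimal_differentials ::
  "(nat \<Rightarrow> 'g set) \<Rightarrow> (nat \<Rightarrow> 'g \<Rightarrow> 'a) \<Rightarrow> (nat \<Rightarrow> 'g \<Rightarrow> 'g \<Rightarrow> 'k::zero) \<Rightarrow> bool" where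
  "minimal_differentials gens gr D \<longleftrightarrow> (\<forall>i g h. D i g h \<noteq> 0 \<longrightarrow> gr i h \<noteq> gr (Suc i) g)"

text \<open>A minimal free resolution (F_\<bullet>, p_\<bullet>) of the module M = coker(p_1 : F_1 -> F_0).\<close>
definition minimal_free_resolution ::
  "(nat \<Rightarrow> 'g set) \<Rightarrow> (nat \<Rightarrow> 'g \<Rightarrow> 'a::ord) \<Rightarrow> (nat \<Rightarrow> 'g \<Rightarrow> 'g \<Rightarrow> 'k::comm_semiring_1) \<Rightarrow> bool" where
  "minimal_free_resolution gens gr D \<longleftrightarrow>
     graded_free_complex gens gr D \<and> exact_in_positive_degrees gens gr D \<and>
     minimal_differentials gens gr D"

text \<open>On a line, lg i g is the grade of the pulled back generator g^L of F^L_i.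
  Bars I_j = [birth j, death j) for j in J (death may be infinite; empty if equal).
  The canonical resolution F' has F'_0 free on J (grade birth j), F'_1 free on the j with
  finite death (grade death j), d_j |-> x^(d_j - b_j) b_j.
  phi_0 : F^L_0 -> F'_0 is given by the matrix A (g^L |-> sum_j A g j x^(..) b_j),
  phi_1 : F^L_1 -> F'_1 by the matrix C (r^L |-> sum_j C r j x^(..) d_j).\<close>

definition phi0_apply :: "'g set \<Rightarrow> ('g \<Rightarrow> 'j \<Rightarrow> 'k::comm_semiring_1) \<Rightarrow> ('g \<Rightarrow> 'k) \<Rightarrow> ('j \<Rightarrow> 'k)" where
  "phi0_apply G0 A x = (\<lambda>j. \<Sum>g\<in>G0. x g * A g j)"

text \<open>The map induced by phi_0 on cokernels, M^L(t) -> (direct sum of 1^{I_j})(t), is an isomorphism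
  of vector spaces at every t.  Here M^L(t) = F^L_0(t)/im p^L_1(t), and
  F'_0(t)/im p'_1(t) has im p'_1(t) = the span of the b_j with death j <= t.\<close>
definition induces_coker_iso ::
  "(nat \<Rightarrow> 'g set) \<Rightarrow> (nat \<Rightarrow> 'g \<Rightarrow> real) \<Rightarrow> (nat \<Rightarrow> 'g \<Rightarrow> 'g \<Rightarrow> 'k::field) \<Rightarrow>
   'j set \<Rightarrow> ('j \<Rightarrow> real) \<Rightarrow> ('j \<Rightarrow> ereal) \<Rightarrow> ('g \<Rightarrow> 'j \<Rightarrow> 'k) \<Rightarrow> bool" where
  "induces_coker_iso gens lg D J birth death A \<longleftrightarrow>
     (\<forall>t::real.
        (\<forall>z. (\<forall>j. z j \<noteq> 0 \<longrightarrow> j \<in> J \<and> birth j \<le> t) \<longrightarrow>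
             (\<exists>x. free_elem gens lg 0 t x \<and>
                  (\<forall>j\<in>J. \<not> death j \<le> ereal t \<longrightarrow> phi0_apply (gens 0) A x j = z j))) \<and>
        (\<forall>x. free_elem gens lg 0 t x \<and>
             (\<forall>j\<in>J. \<not> death j \<le> ereal t \<longrightarrow> phi0_apply (gens 0) A x j = 0) \<longrightarrow>
             (\<exists>y. free_elem gens lg 1 t y \<and> dapply gens D 0 y = x)))"

text \<open>J indexes a barcode decomposition phi : M^L ~= (+)_j 1^{I_j} with |J| = number of generators
  of F_0, and (A, C) is a chain map phi_\<bullet> : F^L_\<bullet> -> F'_\<bullet> lifting phi.\<close>
definition lifted_bar_decomposition ::
  "(nat \<Rightarrow> 'g set) \<Rightarrow> (nat \<Rightarrow> 'g \<Rightarrow> real) \<Rightarrow> (nat \<Rightarrow> 'g \<Rightarrow> 'g \<Rightarrow> 'k::field) \<Rightarrow>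
   'j set \<Rightarrow> ('j \<Rightarrow> real) \<Rightarrow> ('j \<Rightarrow> ereal) \<Rightarrow> ('g \<Rightarrow> 'j \<Rightarrow> 'k) \<Rightarrow> ('g \<Rightarrow> 'j \<Rightarrow> 'k) \<Rightarrow> bool" where
  "lifted_bar_decomposition gens lg D J birth death A C \<longleftrightarrow>
     finite J \<and> card J = card (gens 0) \<and>
     (\<forall>j\<in>J. ereal (birth j) \<le> death j) \<and>
     (\<forall>g j. A g j \<noteq> 0 \<longrightarrow> g \<in> gens 0 \<and> j \<in> J \<and> birth j \<le> lg 0 g) \<and>
     (\<forall>r j. C r j \<noteq> 0 \<longrightarrow> r \<in> gens 1 \<and> j \<in> J \<and> death j \<le> ereal (lg 1 r)) \<and>
     (\<forall>r\<in>gens 1. \<forall>j\<in>J. (\<Sum>g\<in>gens 0. D 0 r g * A g j) = C r j) \<and>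
     (\<forall>s\<in>gens 2. \<forall>j\<in>J. (\<Sum>r\<in>gens 1. D 1 s r * C r j) = 0) \<and>
     induces_coker_iso gens lg D J birth death A"

definition generates_bar :: "(nat \<Rightarrow> 'g \<Rightarrow> real) \<Rightarrow> ('j \<Rightarrow> real) \<Rightarrow> ('g \<Rightarrow> 'j \<Rightarrow> 'k::zero) \<Rightarrow> 'g \<Rightarrow> 'j \<Rightarrow> bool" where
  "generates_bar lg birth A g j \<longleftrightarrow> lg 0 g = birth j \<and> A g j \<noteq> 0"

definition kills_bar :: "(nat \<Rightarrow> 'g \<Rightarrow> real) \<Rightarrow> ('j \<Rightarrow> ereal) \<Rightarrow> ('g \<Rightarrow> 'j \<Rightarrow> 'k::zero) \<Rightarrow> 'g \<Rightarrow> 'j \<Rightarrow> bool" where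
  "kills_bar lg death C r j \<longleftrightarrow> death j = ereal (lg 1 r) \<and> C r j \<noteq> 0"

definition normalized_decomposition ::
  "(nat \<Rightarrow> 'g set) \<Rightarrow> (nat \<Rightarrow> 'g \<Rightarrow> real) \<Rightarrow> 'j set \<Rightarrow> ('j \<Rightarrow> real) \<Rightarrow> ('j \<Rightarrow> ereal) \<Rightarrow>
   ('g \<Rightarrow> 'j \<Rightarrow> 'k::zero) \<Rightarrow> ('g \<Rightarrow> 'j \<Rightarrow> 'k) \<Rightarrow> bool" where
  "normalized_decomposition gens lg J birth death A C \<longleftrightarrow>
     (\<forall>j\<in>J. \<exists>!g. g \<in> gens 0 \<and> generates_bar lg birth A g j) \<and>
     (\<forall>j\<in>J. death j \<noteq> \<infinity> \<longrightarrow> (\<exists>!r. r \<in> gens 1 \<and> kills_bar lg death C r j)) \<and>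
     (\<forall>g\<in>gens 0. \<exists>j\<in>J. generates_bar lg birth A g j)"

end

theory Submission
  imports Defs
begin

text \<open>Restrict to the line \<open>\<L>\<^sub>b\<close> through the grade of \<open>b\<close>, on which \<open>b\<^sup>\<L>\<close> has grade \<open>0\<close>.
  If every bar generated by \<open>b\<close> were empty, then each bar alive at \<open>0\<close> on which \<open>\<phi>\<^sub>0(b\<^sup>\<L>)\<close>
  is nonzero would be born strictly before \<open>0\<close>; by surjectivity of \<open>\<phi>\<close> slightly below \<open>0\<close> one
  finds \<open>x'\<close> of negative grade with \<open>b\<^sup>\<L> - x'\<close> in the kernel of \<open>\<phi>\<close> at \<open>0\<close>, hence in the image of
  \<open>p\<^sub>1\<^sup>\<L>\<close> at grade \<open>0\<close>.  Some relation \<open>r\<close> of grade \<open>\<le> 0\<close> on \<open>\<L>\<^sub>b\<close> would then involve \<open>b\<close>.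
  But by minimality such a relation has grade strictly above \<open>gr b\<close>, and pushing any grade
  strictly above \<open>gr b\<close> onto \<open>\<L>\<^sub>b\<close> gives a positive parameter.\<close>

lemma diag_line_nth: "diag_line a t $ i = a $ i + t"
  by (simp add: diag_line_def)

lemma diag_line_le_iff: "diag_line a t \<le> diag_line a s \<longleftrightarrow> t \<le> s"
  by (simp add: less_eq_vec_def diag_line_nth)

lemma inj_diag_line: "inj (diag_line a)"
  by (rule injI) (metis diag_line_le_iff order_antisym order_refl)

lemma push_line_eq_Max:
  fixes a p :: "real^'n"
  shows "push_line a p = diag_line a (Max (range (\<lambda>i. p $ i - a $ i)))"
  unfolding push_line_def
proof (rule Least_equality)
  let ?t = "Max (range (\<lambda>i. p $ i - a $ i))"
  have "p $ i - a $ i \<le> ?t" for i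
    by (rule Max_ge) auto
  then show "diag_line a ?t \<in> line_of a \<and> p \<le> diag_line a ?t"
    by (auto simp: line_of_def less_eq_vec_def diag_line_nth algebra_simps)
  fix q assume q: "q \<in> line_of a \<and> p \<le> q"
  then obtain s where s: "q = diag_line a s"
    by (auto simp: line_of_def)
  have "?t \<in> range (\<lambda>i. p $ i - a $ i)"
    by (rule Max_in) auto
  then obtain i where "?t = p $ i - a $ i"
    by blast
  moreover have "p $ i \<le> a $ i + s"
    using q s by (simp add: less_eq_vec_def diag_line_nth)
  ultimately have "?t \<le> s"
    by linarith
  then show "diag_line a ?t \<le> q"
    using s diag_line_le_iff by blast
qed

lemma line_grade_eq_Max:
  fixes a p :: "real^'n"
  shows "line_grade a p = Max (range (\<lambda>i. p $ i - a $ i))"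
  unfolding line_grade_def push_line_eq_Max
  using inj_diag_line[THEN injD] by (intro the_equality) auto

lemma line_grade_pos:
  fixes a p :: "real^'n"
  assumes "a \<le> p" "a \<noteq> p"
  shows "line_grade a p > 0"
proof -
  obtain i where "a $ i \<noteq> p $ i"
    using assms(2) by (auto simp: vec_eq_iff)
  with assms(1) have "p $ i - a $ i > 0"
    by (auto simp: less_eq_vec_def order_le_less)
  moreover have "p $ i - a $ i \<le> Max (range (\<lambda>i. p $ i - a $ i))"
    by (rule Max_ge) auto
  ultimately show ?thesis
    unfolding line_grade_eq_Max by linarith
qed

lemma line_grade_self: "line_grade (a::real^'n) a = 0"
  by (simp add: line_grade_eq_Max)

lemma minimal_free_resolution_grade_less:
  assumes "minimal_free_resolution gens gr D" "D i g h \<noteq> 0"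
  shows "gr i h \<le> gr (Suc i) g" "gr i h \<noteq> gr (Suc i) g"
  using assms
  unfolding minimal_free_resolution_def graded_free_complex_def minimal_differentials_def
  by blast+

lemma exists_less_above_all_less:
  fixes t :: real
  assumes "finite S"
  shows "\<exists>t'<t. \<forall>s\<in>S. s < t \<longrightarrow> s \<le> t'"
proof -
  let ?T = "insert (t - 1) {s\<in>S. s < t}"
  have "finite ?T"
    using assms by simp
  then show ?thesis
    by (intro exI[of _ "Max ?T"]) (auto simp: Max_less_iff)
qed

lemma phi0_apply_indicator:
  assumes "finite G" "g \<in> G"
  shows "phi0_apply G A (\<lambda>h. if h = g then 1 else 0) j = A g j"
proof -
  have "(\<Sum>h\<in>G. (if h = g then 1 else 0) * A h j) = (\<Sum>h\<in>G. if h = g then A h j else 0)"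
    by (rule sum.cong) auto
  then show ?thesis
    using assms by (simp add: phi0_apply_def)
qed

lemma phi0_apply_diff:
  fixes A :: "'g \<Rightarrow> 'j \<Rightarrow> 'k::comm_ring_1"
  shows "phi0_apply G A (\<lambda>h. x h - y h) j = phi0_apply G A x j - phi0_apply G A y j"
  by (simp add: phi0_apply_def left_diff_distrib sum_subtractf)

lemma free_elem_mono:
  fixes gr :: "nat \<Rightarrow> 'g \<Rightarrow> 'a::preorder"
  shows "free_elem gens gr i s x \<Longrightarrow> s \<le> t \<Longrightarrow> free_elem gens gr i t x"
  unfolding free_elem_def by (meson order_trans)

lemma induces_coker_iso_surj:
  assumes "induces_coker_iso gens lg D J birth death A"
    and "\<forall>j. z j \<noteq> 0 \<longrightarrow> j \<in> J \<and> birth j \<le> t"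
  obtains x where "free_elem gens lg 0 t x"
    and "\<forall>j\<in>J. \<not> death j \<le> ereal t \<longrightarrow> phi0_apply (gens 0) A x j = z j"
  using assms unfolding induces_coker_iso_def by blast

lemma induces_coker_iso_kernel:
  assumes "induces_coker_iso gens lg D J birth death A"
    and "free_elem gens lg 0 t x"
    and "\<And>j. j \<in> J \<Longrightarrow> \<not> death j \<le> ereal t \<Longrightarrow> phi0_apply (gens 0) A x j = 0"
  obtains y where "free_elem gens lg 1 t y" "dapply gens D 0 y = x"
  using assms unfolding induces_coker_iso_def by blast

lemma boundary_coefficient_nonzero:
  assumes "free_elem gens gr 1 t y" "dapply gens D 0 y g \<noteq> 0"
  shows "\<exists>r\<in>gens 1. gr 1 r \<le> t \<and> D 0 r g \<noteq> 0"
proof -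
  have "(\<Sum>r\<in>gens 1. y r * D 0 r g) \<noteq> 0"
    using assms(2) by (simp add: dapply_def)
  then obtain r where "r \<in> gens 1" "y r * D 0 r g \<noteq> 0"
    by (rule sum.not_neutral_contains_not_neutral)
  moreover from this(2) have "y r \<noteq> 0" "D 0 r g \<noteq> 0"
    by auto
  ultimately show ?thesis
    using assms(1) unfolding free_elem_def by blast
qed

lemma relation_at_generator_grade:
  fixes lg :: "nat \<Rightarrow> 'g \<Rightarrow> real" and D :: "nat \<Rightarrow> 'g \<Rightarrow> 'g \<Rightarrow> 'k::field"
  assumes iso: "induces_coker_iso gens lg D J birth death A"
    and fin: "finite J" "finite (gens 0)"
    and g: "g \<in> gens 0"
    and A_birth: "\<forall>j\<in>J. A g j \<noteq> 0 \<longrightarrow> birth j \<le> lg 0 g"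
    and empty_bars: "\<forall>j\<in>J. A g j \<noteq> 0 \<longrightarrow> birth j = lg 0 g \<longrightarrow> death j \<le> ereal (birth j)"
  shows "\<exists>r\<in>gens 1. lg 1 r \<le> lg 0 g \<and> D 0 r g \<noteq> 0"
proof -
  define t where "t = lg 0 g"
  obtain t' where "t' < t" and t': "\<forall>j\<in>J. birth j < t \<longrightarrow> birth j \<le> t'"
    using exists_less_above_all_less[of "birth ` J" t] fin by auto
  define z where "z = (\<lambda>j. if j \<in> J \<and> birth j < t then A g j else 0)"
  have "\<forall>j. z j \<noteq> 0 \<longrightarrow> j \<in> J \<and> birth j \<le> t'"
    using t' by (simp add: z_def)
  with iso obtain x' where x'_free: "free_elem gens lg 0 t' x'"
    and x'_lifts: "\<forall>j\<in>J. \<not> death j \<le> ereal t' \<longrightarrow> phi0_apply (gens 0) A x' j = z j"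
    by (rule induces_coker_iso_surj)
  have "x' g = 0"
    using x'_free \<open>t' < t\<close> unfolding free_elem_def t_def by force
  define x where "x = (\<lambda>h. (if h = g then 1 else 0) - x' h)"
  have "free_elem gens lg 0 t (\<lambda>h. if h = g then 1 else 0)"
    using g by (simp add: free_elem_def t_def)
  moreover have "free_elem gens lg 0 t x'"
    using x'_free \<open>t' < t\<close> by (simp add: free_elem_mono)
  ultimately have x_free: "free_elem gens lg 0 t x"
    unfolding free_elem_def x_def by (metis diff_zero)
  have "phi0_apply (gens 0) A x j = 0" if j: "j \<in> J" "\<not> death j \<le> ereal t" for j
  proof -
    have "\<not> death j \<le> ereal t'"
      using j \<open>t' < t\<close> by (meson ereal_less_eq(3) less_imp_le order_trans)
    then have "phi0_apply (gens 0) A x j = A g j - z j"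
      using j x'_lifts fin g by (simp add: x_def phi0_apply_diff phi0_apply_indicator)
    moreover have "birth j < t" if "A g j \<noteq> 0"
    proof -
      have "birth j \<le> t" "birth j = t \<longrightarrow> death j \<le> ereal t"
        using A_birth empty_bars j(1) that unfolding t_def by auto
      then show ?thesis
        using j(2) by fastforce
    qed
    ultimately show ?thesis
      using j(1) by (auto simp: z_def)
  qed
  with iso x_free obtain y where y_free: "free_elem gens lg 1 t y" and "dapply gens D 0 y = x"
    by (rule induces_coker_iso_kernel)
  moreover have "x g = 1"
    using \<open>x' g = 0\<close> by (simp add: x_def)
  ultimately have "dapply gens D 0 y g \<noteq> 0"
    by simp
  with y_free show ?thesis
    unfolding t_def by (rule boundary_coefficient_nonzero)
qed

theorem mainTheorem15:
  fixes gens :: "nat \<Rightarrow> 'g set"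
    and gr :: "nat \<Rightarrow> 'g \<Rightarrow> real^'n"
    and D :: "nat \<Rightarrow> 'g \<Rightarrow> 'g \<Rightarrow> 'k::field"
    and J :: "'j set" and birth :: "'j \<Rightarrow> real" and death :: "'j \<Rightarrow> ereal"
    and A C :: "'g \<Rightarrow> 'j \<Rightarrow> 'k"
    and b :: 'g
  assumes res: "minimal_free_resolution gens gr D"
    and b: "b \<in> gens 0"
    and dec: "lifted_bar_decomposition gens (\<lambda>i g. line_grade (gr 0 b) (gr i g)) D J birth death A C"
    and norm: "normalized_decomposition gens (\<lambda>i g. line_grade (gr 0 b) (gr i g)) J birth death A C"
  shows "\<exists>j\<in>J. generates_bar (\<lambda>i g. line_grade (gr 0 b) (gr i g)) birth A b j
               \<and> ereal (birth j) < death j"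
proof (rule ccontr)
  let ?lg = "\<lambda>i g. line_grade (gr 0 b) (gr i g)"
  assume no_bar: "\<not> ?thesis"
  have fin: "finite J" "finite (gens 0)"
    and A_birth: "\<forall>j\<in>J. A b j \<noteq> 0 \<longrightarrow> birth j \<le> ?lg 0 b"
    and iso: "induces_coker_iso gens ?lg D J birth death A"
    using res dec
    unfolding minimal_free_resolution_def graded_free_complex_def lifted_bar_decomposition_def
    by auto
  have "\<forall>j\<in>J. A b j \<noteq> 0 \<longrightarrow> birth j = ?lg 0 b \<longrightarrow> death j \<le> ereal (birth j)"
    using no_bar by (auto simp: generates_bar_def not_less)
  then obtain r where "r \<in> gens 1" "?lg 1 r \<le> ?lg 0 b" "D 0 r b \<noteq> 0"
    using relation_at_generator_grade[OF iso fin b A_birth] by blast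
  moreover have "?lg 1 r > 0"
    using minimal_free_resolution_grade_less[OF res \<open>D 0 r b \<noteq> 0\<close>]
    by (simp add: line_grade_pos)
  ultimately show False
    by (simp add: line_grade_self)
qed

end
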